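(* Let $H$ be a finite group of odd order with $d(H)\le 1$. Then $\mathsf{GEN}(\mathbb{Z}_2^2\times H)=*1$.
   Context: For a finite group $G$, $\mathsf{GEN}(G)$ is the following impartial two-player game. A position is a set of elements selected so far; the starting position is $\emptyset$. From a position $P$ with $\langle P\rangle\neq G$, the player to move selects some $g\in G\setminus P$, producing the position $P\cup\{g\}$ (these are the options of $P$); a position $P$ with $\langle P\rangle = G$ has no options. The nim-number of a position is defined recursively by $\operatorname{nim}(P)=\operatorname{mex}\{\operatorname{nim}(Q): Q \text{ an option of } P\}$, where $\operatorname{mex}(A)$ is the least nonnegative integer not in $A$. We write $\mathsf{GEN}(G)=*n$ if $\operatorname{nim}(\emptyset)=n$. $d(G)$ denotes the minimum size of a generating set of $G$ (with $d(G)=0$ for trivial $G$); $\mathbb{Z}_2^2=\mathbb{Z}_2\times\mathbb{Z}_2$. *)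

theory Defs
  imports "HOL-Algebra.Algebra"
begin

definition mex :: "nat set \<Rightarrow> nat" where
  "mex A = (LEAST n. n \<notin> A)"

function gen_nim :: "('a, 'b) monoid_scheme \<Rightarrow> 'a set \<Rightarrow> nat" where
  "gen_nim G P =
     (if finite (carrier G) \<and> P \<subseteq> carrier G \<and> generate G P \<noteq> carrier G
      then mex ((\<lambda>g. gen_nim G (insert g P)) ` (carrier G - P))
      else 0)"
  by auto
termination
  by (relation "measure (\<lambda>(G, P). card (carrier G - P))")
     (simp, simp only: in_measure split_conv, rule psubset_card_mono, auto)

declare gen_nim.simps [simp del]

definition GEN_nim :: "('a, 'b) monoid_scheme \<Rightarrow> nat" where
  "GEN_nim G = gen_nim G {}"

definition min_gens :: "('a, 'b) monoid_scheme \<Rightarrow> nat" where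
  "min_gens G = (LEAST n. \<exists>S. S \<subseteq> carrier G \<and> finite S \<and> card S = n \<and> generate G S = carrier G)"

end

theory Submission
  imports Defs
begin

text \<open>Write \<open>G = \<int>\<^sub>2\<^sup>2 \<times> H\<close> with \<open>H = \<langle>c\<rangle>\<close> of odd order and \<open>L = {0} \<times> H\<close>. A non-generating
  position \<open>P\<close> has nim-number 1 if \<open>|P|\<close> is even, 0 if \<open>|P|\<close> is odd and \<open>P \<subseteq> L\<close>, and 2 otherwise.
  The preimages \<open>{0, w} \<times> H\<close> of the lines of \<open>\<int>\<^sub>2\<^sup>2\<close> are proper subgroups, so a position inside
  one of them never generates. Since \<open>|H|\<close> is odd, the powers of \<open>(v, h)\<close> contain \<open>(v, 1)\<close> and
  \<open>(0, h)\<close>; hence if \<open>(v, h) \<in> P\<close> with \<open>v \<noteq> 0\<close>, adding \<open>(w, c)\<close> for a third nonzero \<open>w\<close> generates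
  \<open>G\<close>, and \<open>\<langle>P\<rangle>\<close> contains the involution \<open>(v, 1)\<close>, so it has even order and for odd \<open>|P|\<close> offers
  a non-generating move. Finally an even-size \<open>P \<subseteq> L\<close> is a proper subset of \<open>L\<close>, as \<open>|L| = |H|\<close>
  is odd.\<close>

lemma mex_eqI:
  assumes "{..<n} \<subseteq> A" and "n \<notin> A"
  shows "mex A = n"
  unfolding mex_def
proof (rule Least_equality)
  show "\<And>m. m \<notin> A \<Longrightarrow> n \<le> m"
    using assms(1) by (meson lessThan_iff not_le subsetD)
qed (use assms(2) in simp)

lemma gen_nim_generating: "generate G P = carrier G \<Longrightarrow> gen_nim G P = 0"
  by (subst gen_nim.simps) simp

lemma gen_nim_unfold:
  assumes "finite (carrier G)" and "P \<subseteq> carrier G" and "generate G P \<noteq> carrier G"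
  shows "gen_nim G P = mex ((\<lambda>g. gen_nim G (insert g P)) ` (carrier G - P))"
  using assms by (subst gen_nim.simps) simp

lemma (in group) single_generator_if_min_gens_le_1:
  assumes "finite (carrier G)" and "min_gens G \<le> 1"
  obtains c where "c \<in> carrier G" and "generate G {c} = carrier G"
proof -
  have "generate G (carrier G) = carrier G"
    using generate_incl[of "carrier G"] generate.incl[of _ "carrier G" G] by blast
  then have "\<exists>n S. S \<subseteq> carrier G \<and> finite S \<and> card S = n \<and> generate G S = carrier G"
    using assms(1) by blast
  from LeastI_ex[OF this] obtain S where
    S: "S \<subseteq> carrier G" "finite S" "card S = min_gens G" "generate G S = carrier G"
    unfolding min_gens_def by blast
  then consider "S = {}" | c where "S = {c}"
    using assms(2) by (metis card_0_eq card_1_singletonE le_Suc_eq le_zero_eq One_nat_def)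
  then show ?thesis
  proof cases
    case 1
    then show ?thesis using that[of \<one>] S(4) generate_empty generate_one by simp
  next
    case (2 c)
    then show ?thesis using that[of c] S(1,4) by simp
  qed
qed

lemma (in group) subgroup_nat_pow_closed:
  assumes "subgroup K G" and "x \<in> K"
  shows "x [^] (n::nat) \<in> K"
  using subgroup_int_pow_closed[OF assms, of "int n"] subgroup.mem_carrier[OF assms]
  by (simp add: int_pow_int)

lemma (in group) not_generate_if_subset_proper_subgroup:
  assumes "Q \<subseteq> K" and "subgroup K G" and "K \<noteq> carrier G"
  shows "generate G Q \<noteq> carrier G"
  using generate_subgroup_incl[OF assms(1,2)] subgroup.subset[OF assms(2)] assms(3) by blast

lemma (in group) even_order_if_involution:
  assumes "x \<in> carrier G" and "x \<noteq> \<one>" and "x \<otimes> x = \<one>"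
  shows "even (order G)"
proof -
  have "x [^] (2::nat) = \<one>"
    using assms(1,3) by (simp add: numeral_2_eq_2)
  then have "ord x dvd 2"
    using pow_eq_id[OF assms(1)] by blast
  moreover have "ord x \<noteq> 1"
    using ord_eq_1[OF assms(1)] assms(2) by blast
  ultimately have "ord x = 2"
    using dvd_antisym nat_dvd_1_iff_1 prime_nat_iff two_is_prime_nat by metis
  then show ?thesis
    using ord_dvd_group_order[OF assms(1)] by simp
qed

lemma (in group) even_card_subgroup_if_involution:
  assumes "subgroup K G" and "x \<in> K" and "x \<noteq> \<one>" and "x \<otimes> x = \<one>"
  shows "even (card K)"
proof -
  interpret K: group "G\<lparr>carrier := K\<rparr>"
    by (rule subgroup_imp_group[OF assms(1)])
  show ?thesis
    using K.even_order_if_involution[of x] assms(2-4) by (simp add: order_def)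
qed

lemma nat_pow_DirProd:
  "(a, b) [^]\<^bsub>A \<times>\<times> B\<^esub> (k::nat) = (a [^]\<^bsub>A\<^esub> k, b [^]\<^bsub>B\<^esub> k)"
  by (induction k) auto

lemma DirProd_subgroup_eq_carrier:
  assumes "group A" and "group B" and K: "subgroup K (A \<times>\<times> B)"
    and left: "\<And>x. x \<in> carrier A \<Longrightarrow> (x, \<one>\<^bsub>B\<^esub>) \<in> K"
    and right: "\<And>y. y \<in> carrier B \<Longrightarrow> (\<one>\<^bsub>A\<^esub>, y) \<in> K"
  shows "K = carrier (A \<times>\<times> B)"
proof
  show "K \<subseteq> carrier (A \<times>\<times> B)"
    using subgroup.subset[OF K] .
  show "carrier (A \<times>\<times> B) \<subseteq> K"
  proof
    fix z assume "z \<in> carrier (A \<times>\<times> B)"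
    then obtain x y where z: "z = (x, y)" "x \<in> carrier A" "y \<in> carrier B"
      by auto
    then have "(x, \<one>\<^bsub>B\<^esub>) \<otimes>\<^bsub>A \<times>\<times> B\<^esub> (\<one>\<^bsub>A\<^esub>, y) \<in> K"
      using subgroup.m_closed[OF K] left right by blast
    then show "z \<in> K"
      using z group.is_monoid[OF assms(1)]
        group.is_monoid[OF assms(2)] by (simp add: monoid.l_one monoid.r_one)
  qed
qed

lemma DirProd_subgroup_generate_right:
  assumes "group A" and "group B" and K: "subgroup K (A \<times>\<times> B)"
    and S: "\<And>y. y \<in> S \<Longrightarrow> (\<one>\<^bsub>A\<^esub>, y) \<in> K"
    and "y \<in> generate B S"
  shows "(\<one>\<^bsub>A\<^esub>, y) \<in> K"
  using assms(5)
proof (induction rule: generate.induct)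
  case one
  show ?case using subgroup.one_closed[OF K] by simp
next
  case (incl y)
  then show ?case by (rule S)
next
  case (inv y)
  have "inv\<^bsub>A \<times>\<times> B\<^esub> (\<one>\<^bsub>A\<^esub>, y) \<in> K"
    using subgroup.m_inv_closed[OF K S[OF inv]] .
  then show ?case
    using inv_DirProd[OF assms(1,2)] subgroup.subset[OF K] S[OF inv] group.is_monoid[OF assms(1)]
    by (auto simp: monoid.inv_one)
next
  case (eng y z)
  have "(\<one>\<^bsub>A\<^esub>, y) \<otimes>\<^bsub>A \<times>\<times> B\<^esub> (\<one>\<^bsub>A\<^esub>, z) \<in> K"
    using subgroup.m_closed[OF K eng.IH] .
  then show ?case
    using group.is_monoid[OF assms(1)] by (simp add: monoid.l_one)
qed

abbreviation klein4 :: "(int \<times> int) monoid" where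
  "klein4 \<equiv> integer_mod_group 2 \<times>\<times> integer_mod_group 2"

lemma carrier_Z2: "carrier (integer_mod_group 2) = {0, 1}"
  by (auto simp: carrier_integer_mod_group)

lemma carrier_klein4: "carrier klein4 = {(0, 0), (0, 1), (1, 0), (1, 1)}"
  by (auto simp: carrier_Z2)

lemma klein4_zero_closed: "(0, 0) \<in> carrier klein4"
  by simp

lemma group_klein4: "group klein4"
  by (simp add: DirProd_group)

lemma klein4_nat_pow:
  assumes "v \<in> carrier klein4"
  shows "v [^]\<^bsub>klein4\<^esub> (k::nat) = (if even k then (0, 0) else v)"
proof -
  have "int k mod 2 = (if even k then 0 else 1)"
    by presburger
  then show ?thesis
    using assms[unfolded carrier_klein4] by (auto simp: nat_pow_DirProd)
qed

lemma klein4_mult_self: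
  assumes "v \<in> carrier klein4"
  shows "v \<otimes>\<^bsub>klein4\<^esub> v = (0, 0)"
  using assms[unfolded carrier_klein4] by auto

lemma klein4_inv:
  assumes "v \<in> carrier klein4"
  shows "inv\<^bsub>klein4\<^esub> v = v"
  using group.inv_equality[OF group_klein4 _ assms assms] klein4_mult_self[OF assms] by simp

lemma klein4_basis_elements:
  assumes "v \<in> carrier klein4" "w \<in> carrier klein4" "x \<in> carrier klein4"
    and "v \<noteq> (0, 0)" "w \<noteq> (0, 0)" "v \<noteq> w"
  shows "x \<in> {(0, 0), v, w, v \<otimes>\<^bsub>klein4\<^esub> w}"
  using assms(1-3)[unfolded carrier_klein4] assms(4-6) by auto

lemma klein4_nonzero_avoiding:
  obtains w where "w \<in> carrier klein4" "w \<noteq> (0, 0)" "w \<noteq> v"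
proof (cases "v = (1, 0)")
  case True
  then show ?thesis using that[of "(0, 1)"] by (simp add: carrier_Z2)
next
  case False
  then show ?thesis using that[of "(1, 0)"] by (simp add: carrier_Z2)
qed

lemma subgroup_klein4_line:
  assumes "w \<in> carrier klein4"
  shows "subgroup {(0, 0), w} klein4"
proof (rule group.subgroupI[OF group_klein4])
  show "{(0, 0), w} \<subseteq> carrier klein4"
    using assms by simp
  fix a b assume "a \<in> {(0, 0), w}" "b \<in> {(0, 0), w}"
  then show "inv\<^bsub>klein4\<^esub> a \<in> {(0, 0), w}" "a \<otimes>\<^bsub>klein4\<^esub> b \<in> {(0, 0), w}"
    using klein4_inv assms[unfolded carrier_klein4] by auto
qed simp

locale odd_cyclic =
  fixes H :: "('a, 'b) monoid_scheme" and c :: 'a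
  assumes group_H: "group H" and finite_carrier_H: "finite (carrier H)"
    and odd_order_H: "odd (order H)"
    and generator: "c \<in> carrier H" and generate_generator: "generate H {c} = carrier H"
begin

abbreviation G :: "((int \<times> int) \<times> 'a) monoid" where
  "G \<equiv> klein4 \<times>\<times> H"

lemma group_G: "group G"
  by (simp add: DirProd_group group_klein4 group_H)

interpretation H: group H by (rule group_H)
interpretation G: group G by (rule group_G)

lemma finite_carrier_G: "finite (carrier G)"
  using finite_carrier_H by (simp add: carrier_Z2)

definition line_subgroup :: "int \<times> int \<Rightarrow> ((int \<times> int) \<times> 'a) set" where
  "line_subgroup w = {(0, 0), w} \<times> carrier H"

lemma subgroup_line_subgroup:
  "w \<in> carrier klein4 \<Longrightarrow> subgroup (line_subgroup w) G"
  unfolding line_subgroup_def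
  by (rule DirProd_subgroups[OF group_klein4 subgroup_klein4_line group_H H.subgroup_self])

lemma not_generate_if_subset_line_subgroup:
  assumes "w \<in> carrier klein4" and "Q \<subseteq> line_subgroup w"
  shows "generate G Q \<noteq> carrier G"
proof (rule G.not_generate_if_subset_proper_subgroup[OF assms(2) subgroup_line_subgroup[OF assms(1)]])
  obtain u where "u \<in> carrier klein4" "u \<noteq> (0, 0)" "u \<noteq> w"
    by (rule klein4_nonzero_avoiding)
  then have "(u, \<one>\<^bsub>H\<^esub>) \<in> carrier G - line_subgroup w"
    by (auto simp: line_subgroup_def)
  then show "line_subgroup w \<noteq> carrier G"
    by blast
qed

lemma card_line_subgroup_zero: "card (line_subgroup (0, 0)) = order H"
  by (simp add: line_subgroup_def order_def card_cartesian_product)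

lemma nat_pow_order_H:
  assumes "v \<in> carrier klein4" and "h \<in> carrier H"
  shows "(v, h) [^]\<^bsub>G\<^esub> order H = (v, \<one>\<^bsub>H\<^esub>)"
    and "(v, h) [^]\<^bsub>G\<^esub> Suc (order H) = ((0, 0), h)"
  using assms odd_order_H H.pow_order_eq_1[OF assms(2)]
  by (simp_all add: nat_pow_DirProd klein4_nat_pow del: nat_pow_Suc)

lemma generate_pair_eq_carrier:
  assumes v: "v \<in> carrier klein4" "v \<noteq> (0, 0)" and h: "h \<in> carrier H"
    and w: "w \<in> carrier klein4" "w \<noteq> (0, 0)" "w \<noteq> v"
  shows "generate G {(v, h), (w, c)} = carrier G"
proof -
  let ?K = "generate G {(v, h), (w, c)}"
  have K: "subgroup ?K G"
    using v h w generator by (intro G.generate_is_subgroup) auto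
  have vh: "(v, h) \<in> ?K" and wc: "(w, c) \<in> ?K"
    by (auto intro: generate.incl)
  have fibre: "(\<one>\<^bsub>klein4\<^esub>, y) \<in> ?K" if "y \<in> carrier H" for y
  proof (rule DirProd_subgroup_generate_right[OF group_klein4 group_H K])
    have "((0, 0), c) \<in> ?K"
      using G.subgroup_nat_pow_closed[OF K wc, of "Suc (order H)"]
        nat_pow_order_H(2)[OF w(1) generator] by simp
    then show "\<And>y. y \<in> {c} \<Longrightarrow> (\<one>\<^bsub>klein4\<^esub>, y) \<in> ?K"
      by simp
    show "y \<in> generate H {c}"
      using that generate_generator by simp
  qed
  have v1: "(v, \<one>\<^bsub>H\<^esub>) \<in> ?K"
    using G.subgroup_nat_pow_closed[OF K vh, of "order H"] nat_pow_order_H(1)[OF v(1) h]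
    by simp
  have w1: "(w, \<one>\<^bsub>H\<^esub>) \<in> ?K"
    using G.subgroup_nat_pow_closed[OF K wc, of "order H"] nat_pow_order_H(1)[OF w(1) generator]
    by simp
  have "(x, \<one>\<^bsub>H\<^esub>) \<in> ?K" if "x \<in> carrier klein4" for x
  proof -
    have "(v \<otimes>\<^bsub>klein4\<^esub> w, \<one>\<^bsub>H\<^esub>) = (v, \<one>\<^bsub>H\<^esub>) \<otimes>\<^bsub>G\<^esub> (w, \<one>\<^bsub>H\<^esub>)"
      by simp
    then have "(v \<otimes>\<^bsub>klein4\<^esub> w, \<one>\<^bsub>H\<^esub>) \<in> ?K"
      using subgroup.m_closed[OF K v1 w1] by simp
    then show ?thesis
      using klein4_basis_elements[OF v(1) w(1) that v(2) w(2) w(3)[symmetric]] v1 w1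
        fibre[OF H.one_closed] by auto
  qed
  then show ?thesis
    using DirProd_subgroup_eq_carrier[OF group_klein4 group_H K] fibre by simp
qed

lemma exists_generating_move:
  assumes P: "P \<subseteq> carrier G" "generate G P \<noteq> carrier G"
    and not_subset: "\<not> P \<subseteq> line_subgroup (0, 0)"
  obtains g where "g \<in> carrier G - P" and "generate G (insert g P) = carrier G"
proof -
  obtain v h where vh: "(v, h) \<in> P" "v \<noteq> (0, 0)"
    using not_subset P(1) by (auto simp: line_subgroup_def)
  then have "v \<in> carrier klein4" "h \<in> carrier H"
    using P(1) by auto
  moreover obtain w where w: "w \<in> carrier klein4" "w \<noteq> (0, 0)" "w \<noteq> v"
    by (rule klein4_nonzero_avoiding)
  ultimately have gen: "generate G {(v, h), (w, c)} = carrier G"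
    using generate_pair_eq_carrier vh(2) by blast
  have "carrier G \<subseteq> generate G (insert (w, c) P)"
    using gen vh(1) G.mono_generate[of "{(v, h), (w, c)}" "insert (w, c) P"] by auto
  moreover have "(w, c) \<in> carrier G"
    using w(1) generator by simp
  ultimately have "generate G (insert (w, c) P) = carrier G"
    using G.generate_incl[of "insert (w, c) P"] P(1) by blast
  moreover from this have "(w, c) \<notin> P"
    using P(2) by (metis insert_absorb)
  ultimately show ?thesis
    using that \<open>(w, c) \<in> carrier G\<close> by blast
qed

lemma exists_nongenerating_move:
  assumes P: "P \<subseteq> carrier G" "generate G P \<noteq> carrier G"
    and not_subset: "\<not> P \<subseteq> line_subgroup (0, 0)" and odd: "odd (card P)"
  obtains g where "g \<in> carrier G - P" and "generate G (insert g P) \<noteq> carrier G"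
proof -
  let ?K = "generate G P"
  have K: "subgroup ?K G"
    using G.generate_is_subgroup[OF P(1)] .
  obtain v h where vh: "(v, h) \<in> P" "v \<noteq> (0, 0)"
    using not_subset P(1) by (auto simp: line_subgroup_def)
  then have v: "v \<in> carrier klein4" and h: "h \<in> carrier H"
    using P(1) by auto
  have "(v, \<one>\<^bsub>H\<^esub>) \<in> ?K"
    using G.subgroup_nat_pow_closed[OF K generate.incl[OF vh(1)], of "order H"]
      nat_pow_order_H(1)[OF v h] by simp
  moreover have "(v, \<one>\<^bsub>H\<^esub>) \<otimes>\<^bsub>G\<^esub> (v, \<one>\<^bsub>H\<^esub>) = \<one>\<^bsub>G\<^esub>"
    using klein4_mult_self[OF v] by simp
  ultimately have "even (card ?K)"
    using G.even_card_subgroup_if_involution[OF K] vh(2) by simp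
  then have "?K \<noteq> P"
    using odd by auto
  then obtain g where g: "g \<in> ?K - P"
    using generate.incl[of _ P G] by blast
  then have "generate G (insert g P) \<subseteq> ?K"
    using G.generate_subgroup_incl[OF _ K] generate.incl[of _ P G] by blast
  then show ?thesis
    using that g P G.generate_incl by blast
qed

definition nim_value :: "((int \<times> int) \<times> 'a) set \<Rightarrow> nat" where
  "nim_value P = (if even (card P) then 1 else if P \<subseteq> line_subgroup (0, 0) then 0 else 2)"

lemma nim_value_even: "even (card Q) \<Longrightarrow> nim_value Q = 1"
  by (simp add: nim_value_def)

lemma nim_value_odd: "odd (card Q) \<Longrightarrow> nim_value Q \<in> {0, 2}"
  by (simp add: nim_value_def)

context
  fixes P :: "((int \<times> int) \<times> 'a) set"
  assumes P: "P \<subseteq> carrier G" "generate G P \<noteq> carrier G"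
    and nonterminal_moves: "\<And>g. g \<in> carrier G - P \<Longrightarrow> generate G (insert g P) \<noteq> carrier G
      \<Longrightarrow> gen_nim G (insert g P) = nim_value (insert g P)"
begin

declare carrier_DirProd [simp del] \<comment> \<open>keeps \<open>carrier G\<close> folded, as in \<open>move_values\<close>\<close>

abbreviation move_values :: "nat set" where
  "move_values \<equiv> (\<lambda>g. gen_nim G (insert g P)) ` (carrier G - P)"

lemma move_in_move_values: "g \<in> carrier G - P \<Longrightarrow> gen_nim G (insert g P) \<in> move_values"
  by (rule imageI)

lemma card_insert_move: "g \<in> carrier G - P \<Longrightarrow> card (insert g P) = Suc (card P)"
  using finite_subset[OF P(1) finite_carrier_G] by simp

lemma move_value:
  assumes "g \<in> carrier G - P"
  shows "gen_nim G (insert g P)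
    = (if generate G (insert g P) = carrier G then 0 else nim_value (insert g P))"
proof (cases "generate G (insert g P) = carrier G")
  case True
  then show ?thesis by (simp add: gen_nim_generating)
next
  case False
  then show ?thesis using nonterminal_moves[OF assms] by (simp)
qed

lemma move_values_cases:
  assumes "n \<in> move_values"
  obtains g where "g \<in> carrier G - P" and "n = 0 \<or> n = nim_value (insert g P)"
proof -
  from assms obtain g where g: "g \<in> carrier G - P" "n = gen_nim G (insert g P)"
    by blast
  then have "n = 0 \<or> n = nim_value (insert g P)"
    using move_value[OF g(1)] by simp
  with g(1) show ?thesis
    by (rule that)
qed

lemma gen_nim_even:
  assumes "even (card P)"
  shows "gen_nim G P = 1"
proof -
  have "0 \<in> move_values"
  proof (cases "P \<subseteq> line_subgroup (0, 0)")
    case True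
    moreover have "P \<noteq> line_subgroup (0, 0)"
      using assms odd_order_H card_line_subgroup_zero by auto
    ultimately obtain g where g: "g \<in> line_subgroup (0, 0) - P"
      by blast
    then have g_move: "g \<in> carrier G - P"
      using subgroup.subset[OF subgroup_line_subgroup[OF klein4_zero_closed]] by blast
    have "insert g P \<subseteq> line_subgroup (0, 0)"
      using g True by blast
    then have "generate G (insert g P) \<noteq> carrier G"
      and "nim_value (insert g P) = 0"
      using not_generate_if_subset_line_subgroup[OF klein4_zero_closed]
        card_insert_move[OF g_move] assms by (simp_all add: nim_value_def)
    then show ?thesis
      using move_in_move_values[OF g_move] move_value[OF g_move] by simp
  next
    case False
    then obtain g where g: "g \<in> carrier G - P" "generate G (insert g P) = carrier G"
      by (rule exists_generating_move[OF P])
    then show ?thesis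
      using move_in_move_values[OF g(1)] move_value[OF g(1)] by simp
  qed
  moreover have "1 \<notin> move_values"
  proof
    assume "1 \<in> move_values"
    then obtain g where g: "g \<in> carrier G - P" "(1::nat) = 0 \<or> 1 = nim_value (insert g P)"
      by (rule move_values_cases)
    have "nim_value (insert g P) \<in> {0, 2}"
      using nim_value_odd card_insert_move[OF g(1)] assms by simp
    then show False
      using g(2) by auto
  qed
  ultimately have "mex move_values = 1"
    by (intro mex_eqI) auto
  then show ?thesis
    using gen_nim_unfold[OF finite_carrier_G P] by simp
qed

lemma gen_nim_odd_subset:
  assumes "odd (card P)" and "P \<subseteq> line_subgroup (0, 0)"
  shows "gen_nim G P = 0"
proof -
  have "gen_nim G (insert g P) = 1" if g: "g \<in> carrier G - P" for g
  proof -
    obtain w y where "g = (w, y)" "w \<in> carrier klein4" "y \<in> carrier H"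
      using g by (auto simp: carrier_DirProd)
    then have "insert g P \<subseteq> line_subgroup w"
      using assms(2) by (auto simp: line_subgroup_def)
    then have "generate G (insert g P) \<noteq> carrier G"
      using not_generate_if_subset_line_subgroup \<open>w \<in> carrier klein4\<close> by blast
    then show ?thesis
      using move_value[OF g] nim_value_even card_insert_move[OF g] assms(1) by simp
  qed
  then have "mex move_values = 0"
    by (intro mex_eqI) auto
  then show ?thesis
    using gen_nim_unfold[OF finite_carrier_G P] by simp
qed

lemma gen_nim_odd_not_subset:
  assumes "odd (card P)" and "\<not> P \<subseteq> line_subgroup (0, 0)"
  shows "gen_nim G P = 2"
proof -
  obtain g where g: "g \<in> carrier G - P" "generate G (insert g P) = carrier G"
    by (rule exists_generating_move[OF P assms(2)])
  then have "0 \<in> move_values"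
    using move_in_move_values[OF g(1)] move_value[OF g(1)] by simp
  moreover obtain g' where g': "g' \<in> carrier G - P" "generate G (insert g' P) \<noteq> carrier G"
    by (rule exists_nongenerating_move[OF P assms(2,1)])
  then have "1 \<in> move_values"
    using move_in_move_values[OF g'(1)] move_value[OF g'(1)] nim_value_even
      card_insert_move[OF g'(1)] assms(1) by simp
  moreover have "2 \<notin> move_values"
  proof
    assume "2 \<in> move_values"
    then obtain g where g: "g \<in> carrier G - P" "(2::nat) = 0 \<or> 2 = nim_value (insert g P)"
      by (rule move_values_cases)
    have "nim_value (insert g P) = 1"
      using nim_value_even card_insert_move[OF g(1)] assms(1) by simp
    then show False
      using g(2) by simp
  qed
  ultimately have "mex move_values = 2"
    by (intro mex_eqI) (auto simp: numeral_2_eq_2 less_Suc_eq)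
  then show ?thesis
    using gen_nim_unfold[OF finite_carrier_G P] by simp
qed

lemma gen_nim_step: "gen_nim G P = nim_value P"
  using gen_nim_even gen_nim_odd_subset gen_nim_odd_not_subset by (simp add: nim_value_def)

end

lemma gen_nim_eq_nim_value:
  "P \<subseteq> carrier G \<Longrightarrow> generate G P \<noteq> carrier G \<Longrightarrow> gen_nim G P = nim_value P"
proof (induction "card (carrier G - P)" arbitrary: P rule: less_induct)
  case (less P)
  have "gen_nim G (insert g P) = nim_value (insert g P)"
    if "g \<in> carrier G - P" and "generate G (insert g P) \<noteq> carrier G" for g
  proof (rule less.hyps[OF _ _ that(2)])
    show "card (carrier G - insert g P) < card (carrier G - P)"
      using that(1) finite_carrier_G by (intro psubset_card_mono) auto
    show "insert g P \<subseteq> carrier G"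
      using that(1) less.prems(1) by blast
  qed
  then show ?case
    using gen_nim_step[OF less.prems] by blast
qed

end

theorem proposition4p10:
  fixes H :: "('a, 'b) monoid_scheme"
  assumes "group H" and "finite (carrier H)" and "odd (order H)"
    and "min_gens H \<le> 1"
  shows "GEN_nim ((integer_mod_group 2 \<times>\<times> integer_mod_group 2) \<times>\<times> H) = 1"
proof -
  obtain c where "c \<in> carrier H" and "generate H {c} = carrier H"
    using group.single_generator_if_min_gens_le_1[OF assms(1,2,4)] by blast
  with assms interpret odd_cyclic H c
    by (simp add: odd_cyclic_def)
  have "generate G {} \<noteq> carrier G"
    by (rule not_generate_if_subset_line_subgroup[of "(0, 0)"]) auto
  then show ?thesis
    using gen_nim_eq_nim_value[of "{}"] nim_value_even[of "{}"] by (simp add: GEN_nim_def)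
qed

end
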